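(* Let $\mathcal{A}$ be a complex Banach algebra with unity and $a,x\in\mathcal{A}$. The following are equivalent: (1) $a$ is g$\pi$-Hirano invertible and its g$\pi$-Hirano inverse is $x$; (2) $xax=x$, $xa=ax$ and $a^{n}-ax\in\mathcal{A}^{qnil}$ for some positive integer $n$; (3) $xax=x$, $xa=ax$ and $a^{n}-a^{m}x\in\mathcal{A}^{qnil}$ for some positive integers $m,n$ with $m-n\neq1$.
   Context: $\mathcal{A}^{qnil}$ denotes the set of quasinilpotent elements of $\mathcal{A}$ (spectrum equal to $\{0\}$). An element $x\in\mathcal{A}$ is a g$\pi$-Hirano inverse of $a$ if $xax=x$, $ax=xa$ and $a-a^{n+2}x\in\mathcal{A}^{qnil}$ for some positive integer $n$; such $x$ is unique when it exists. *)

theory Defs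
  imports "HOL-Analysis.Analysis"
begin

text \<open>A complex unital Banach algebra: a real unital Banach algebra equipped with
a compatible complex scalar multiplication (the library has no complex algebra class).\<close>

class complex_banach_algebra_1 = banach + real_normed_algebra_1 +
  fixes scaleC :: "complex \<Rightarrow> 'a \<Rightarrow> 'a"
  assumes scaleC_of_real: "scaleC (complex_of_real r) x = scaleR r x"
    and scaleC_add_right: "scaleC c (x + y) = scaleC c x + scaleC c y"
    and scaleC_add_left: "scaleC (c + d) x = scaleC c x + scaleC d x"
    and scaleC_scaleC: "scaleC c (scaleC d x) = scaleC (c * d) x"
    and scaleC_one: "scaleC 1 x = x"
    and norm_scaleC: "norm (scaleC c x) = cmod c * norm x"
    and mult_scaleC_left: "scaleC c x * y = scaleC c (x * y)"
    and mult_scaleC_right: "x * scaleC c y = scaleC c (x * y)"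

definition invertible_elem :: "'a::ring_1 \<Rightarrow> bool" where
  "invertible_elem a \<longleftrightarrow> (\<exists>b. a * b = 1 \<and> b * a = 1)"

definition spectrum :: "'a::complex_banach_algebra_1 \<Rightarrow> complex set" where
  "spectrum a = {z. \<not> invertible_elem (a - scaleC z 1)}"

definition qnil :: "'a::complex_banach_algebra_1 set" where
  "qnil = {a. spectrum a = {0}}"

definition gpi_hirano_inverse :: "'a::complex_banach_algebra_1 \<Rightarrow> 'a \<Rightarrow> bool" where
  "gpi_hirano_inverse a x \<longleftrightarrow>
     x * a * x = x \<and> a * x = x * a \<and> (\<exists>n>0. a - a ^ (n + 2) * x \<in> qnil)"

end

theory Submission
  imports Defs "HOL-Computational_Algebra.Fundamental_Theorem_Algebra"
begin

text \<open>Write p = a x. Under x a x = x and x a = a x, p is an idempotent commuting with a, and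
for non-constant polynomials f, g the element f(a) (1 - p) + g(a) p has spectrum
f(\<sigma>(1 - p, a)) \<union> g(\<sigma>(p, a)), where \<sigma>(e, a) is the spectrum of a in the corner algebra e A e.
This is a purely algebraic spectral mapping theorem: factor the polynomial into linear factors
over \<complex>. Since x is the inverse of a in p A p, 0 \<notin> \<sigma>(p, a). Now
a^n - a^(k+1) x = a^n (1 - p) + (a^n - a^k) p is quasinilpotent iff \<sigma>(1 - p, a) \<subseteq> {0},
t^n = t^k on \<sigma>(p, a), and the two corner spectra are not both empty; as t \<noteq> 0 on \<sigma>(p, a),
the middle condition only depends on the gap |n - k|. Each of the three conditions of the
theorem is this statement for a suitable gap.\<close>

lemma invertible_elem_iff_left_right:
  "invertible_elem (y::'a::ring_1) \<longleftrightarrow> (\<exists>r. y * r = 1) \<and> (\<exists>l. l * y = 1)"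
proof -
  have "l = r" if "y * r = 1" "l * y = 1" for l r
    using that by (metis mult.assoc mult_1_left mult_1_right)
  then show ?thesis unfolding invertible_elem_def by blast
qed

lemma invertible_elem_mult_commute_iff:
  fixes u v :: "'a::ring_1"
  assumes uv: "u * v = v * u"
  shows "invertible_elem (u * v) \<longleftrightarrow> invertible_elem u \<and> invertible_elem v"
proof
  assume "invertible_elem (u * v)"
  then obtain w where "u * v * w = 1" "w * (u * v) = 1"
    unfolding invertible_elem_def by blast
  then have "u * (v * w) = 1" "(w * v) * u = 1" "v * (u * w) = 1" "(w * u) * v = 1"
    by (metis mult.assoc uv)+
  then show "invertible_elem u \<and> invertible_elem v"
    unfolding invertible_elem_iff_left_right by blast
next
  assume "invertible_elem u \<and> invertible_elem v"
  then obtain u' v' where "u * u' = 1" "u' * u = 1" "v * v' = 1" "v' * v = 1"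
    unfolding invertible_elem_def by blast
  then have "(u * v) * (v' * u') = 1" "(v' * u') * (u * v) = 1"
    by (metis mult.assoc mult_1_left)+
  then show "invertible_elem (u * v)"
    unfolding invertible_elem_def by blast
qed

lemma peirce_mult:
  fixes p U V U' V' :: "'a::ring_1"
  assumes pp: "p * p = p" and "U' * p = p * U'" and "V' * p = p * V'"
  shows "(U * (1 - p) + V * p) * (U' * (1 - p) + V' * p) = U * U' * (1 - p) + V * V' * p"
proof -
  have "p * (p * X) = p * X" for X
    using pp by (simp flip: mult.assoc)
  then show ?thesis
    using assms by (simp add: algebra_simps)
qed

text \<open>For an idempotent e commuting with w, this is invertibility of e w e in the corner
algebra e A e, whose unit e is completed to 1 by the complementary idempotent 1 - e.\<close>

definition corner_invertible :: "'a::ring_1 \<Rightarrow> 'a \<Rightarrow> bool" where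
  "corner_invertible e w \<longleftrightarrow> invertible_elem (w * e + (1 - e))"

lemma corner_mult:
  fixes e u v :: "'a::ring_1"
  assumes "e * e = e" and "v * e = e * v"
  shows "(u * e + (1 - e)) * (v * e + (1 - e)) = u * v * e + (1 - e)"
  using peirce_mult[of e 1 v 1 u] assms by (simp add: add.commute)

lemma corner_invertible_mult_iff:
  fixes e u v :: "'a::ring_1"
  assumes ee: "e * e = e" and ue: "u * e = e * u" and ve: "v * e = e * v" and uv: "u * v = v * u"
  shows "corner_invertible e (u * v) \<longleftrightarrow> corner_invertible e u \<and> corner_invertible e v"
  using invertible_elem_mult_commute_iff[of "u * e + (1 - e)" "v * e + (1 - e)"]
  unfolding corner_invertible_def by (simp add: corner_mult[OF ee ve] corner_mult[OF ee ue] uv)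

lemma corner_invertible_if_invertible:
  fixes e w :: "'a::ring_1"
  assumes ee: "e * e = e" and we: "w * e = e * w" and "invertible_elem w"
  shows "corner_invertible e w"
proof -
  obtain w' where w1: "w * w' = 1" and w2: "w' * w = 1"
    using \<open>invertible_elem w\<close> unfolding invertible_elem_def by blast
  have w'e: "w' * e = e * w'"
    by (metis w1 w2 we mult.assoc mult_1_left mult_1_right)
  show ?thesis
    unfolding corner_invertible_def invertible_elem_def
    using corner_mult[OF ee w'e, of w] corner_mult[OF ee we, of w'] w1 w2 by auto
qed

lemma invertible_peirce_sum_iff:
  fixes p U V :: "'a::ring_1"
  assumes pp: "p * p = p" and Up: "U * p = p * U" and Vp: "V * p = p * V"
  shows "invertible_elem (U * (1 - p) + V * p) \<longleftrightarrow> corner_invertible (1 - p) U \<and> corner_invertible p V"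
proof -
  have "(U * (1 - p) + 1 * p) * (1 * (1 - p) + V * p) = U * (1 - p) + V * p"
       "(1 * (1 - p) + V * p) * (U * (1 - p) + 1 * p) = U * (1 - p) + V * p"
    using peirce_mult[OF pp, of 1 V U 1] peirce_mult[OF pp, of U 1 1 V] Up Vp by simp_all
  then show ?thesis
    using invertible_elem_mult_commute_iff[of "U * (1 - p) + p" "V * p + (1 - p)"]
    unfolding corner_invertible_def by (simp add: add.commute)
qed

lemma scaleC_zero_left [simp]: "scaleC 0 x = (0::'a::complex_banach_algebra_1)"
  using scaleC_of_real[of 0 x] by simp

lemma scaleC_zero_right [simp]: "scaleC c (0::'a::complex_banach_algebra_1) = 0"
  using scaleC_add_right[of c 0 0] by simp

lemma scaleC_minus_left: "scaleC (- c) x = - scaleC c (x::'a::complex_banach_algebra_1)"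
  using scaleC_add_left[of c "- c" x] by (simp add: minus_unique)

lemma scaleC_one_commute: "scaleC c 1 * w = w * scaleC c (1::'a::complex_banach_algebra_1)"
  by (simp add: mult_scaleC_left mult_scaleC_right)

lemma invertible_elem_scaleC_one:
  "c \<noteq> 0 \<Longrightarrow> invertible_elem (scaleC c (1::'a::complex_banach_algebra_1))"
  unfolding invertible_elem_def
  by (rule exI[of _ "scaleC (inverse c) 1"]) (simp add: mult_scaleC_left scaleC_scaleC scaleC_one)

lemma commute_minus_scaleC_one:
  "w * e = e * w \<Longrightarrow> (w - scaleC c 1) * e = e * (w - scaleC c (1::'a::complex_banach_algebra_1))"
  by (simp add: algebra_simps scaleC_one_commute)

definition corner_spectrum :: "'a::complex_banach_algebra_1 \<Rightarrow> 'a \<Rightarrow> complex set" where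
  "corner_spectrum e w = {l. \<not> corner_invertible e (w - scaleC l 1)}"

lemma spectrum_peirce_sum:
  fixes p u v :: "'a::complex_banach_algebra_1"
  assumes "p * p = p" and "u * p = p * u" and "v * p = p * v"
  shows "spectrum (u * (1 - p) + v * p) = corner_spectrum (1 - p) u \<union> corner_spectrum p v"
proof -
  have "u * (1 - p) + v * p - scaleC l 1 = (u - scaleC l 1) * (1 - p) + (v - scaleC l 1) * p" for l
    by (simp add: algebra_simps)
  then show ?thesis
    unfolding spectrum_def corner_spectrum_def
    using invertible_peirce_sum_iff[OF assms(1) commute_minus_scaleC_one commute_minus_scaleC_one] assms(2,3)
    by auto
qed

definition poly_eval :: "complex poly \<Rightarrow> 'a::complex_banach_algebra_1 \<Rightarrow> 'a" where
  "poly_eval h a = fold_coeffs (\<lambda>c b. scaleC c 1 + a * b) h 0"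

lemma poly_eval_0 [simp]: "poly_eval 0 a = 0"
  by (simp add: poly_eval_def)

lemma poly_eval_pCons [simp]: "poly_eval (pCons c h) a = scaleC c 1 + a * poly_eval h a"
  by (cases "h = 0 \<and> c = 0") (auto simp add: poly_eval_def)

lemma poly_eval_add: "poly_eval (h + k) a = poly_eval h a + poly_eval k a"
proof (induction h arbitrary: k)
  case (pCons c h)
  then show ?case
    by (cases k) (simp add: scaleC_add_left distrib_left add_ac)
qed simp

lemma poly_eval_minus: "poly_eval (- h) a = - poly_eval h a"
  using poly_eval_add[of h "- h" a] by (simp add: minus_unique)

lemma poly_eval_diff: "poly_eval (h - k) a = poly_eval h a - poly_eval k a"
  using poly_eval_add[of h "- k" a] by (simp add: poly_eval_minus)

lemma poly_eval_smult: "poly_eval (smult c h) a = scaleC c (poly_eval h a)"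
  by (induction h) (auto simp: scaleC_scaleC scaleC_add_right mult_scaleC_right)

lemma poly_eval_mult: "poly_eval (h * k) a = poly_eval h a * poly_eval k a"
  by (induction h) (auto simp: poly_eval_add poly_eval_smult distrib_right mult_scaleC_left mult.assoc)

lemma poly_eval_power: "poly_eval (h ^ n) a = poly_eval h a ^ n"
  by (induction n) (auto simp: poly_eval_mult one_pCons scaleC_one)

lemma poly_eval_monom_one: "poly_eval (monom 1 n) a = a ^ n"
proof -
  have "poly_eval [:0, 1:] a = a"
    by (simp add: scaleC_one)
  then show ?thesis
    by (simp add: monom_altdef poly_eval_power)
qed

lemma poly_eval_commute: "a * w = w * a \<Longrightarrow> poly_eval h a * w = w * poly_eval h a"
proof (induction h)
  case (pCons c h)
  then have "a * poly_eval h a * w = w * (a * poly_eval h a)"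
    by (metis mult.assoc)
  then show ?case
    by (simp add: distrib_left distrib_right scaleC_one_commute)
qed simp

lemma corner_invertible_poly_eval_iff:
  fixes a e :: "'a::complex_banach_algebra_1"
  assumes ee: "e * e = e" and ae: "a * e = e * a" and "h \<noteq> 0"
  shows "corner_invertible e (poly_eval h a) \<longleftrightarrow>
         (\<forall>l. poly h l = 0 \<longrightarrow> corner_invertible e (a - scaleC l 1))"
  using \<open>h \<noteq> 0\<close>
proof (induction "degree h" arbitrary: h rule: less_induct)
  case less
  show ?case
  proof (cases "degree h = 0")
    case True
    then obtain c where h: "h = [:c:]" and "c \<noteq> 0"
      using less.prems by (metis degree_eq_zeroE pCons_0_0)
    then have "corner_invertible e (poly_eval h a)"
      using corner_invertible_if_invertible[OF ee scaleC_one_commute invertible_elem_scaleC_one] by simp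
    then show ?thesis
      using h \<open>c \<noteq> 0\<close> by simp
  next
    case False
    then obtain r where "poly h r = 0"
      by (metis constant_degree fundamental_theorem_of_algebra)
    then obtain k where hk: "h = [:-r, 1:] * k"
      by (metis dvdE poly_eq_0_iff_dvd)
    with less.prems have "k \<noteq> 0" by auto
    then have "degree k < degree h"
      unfolding hk by (simp add: degree_mult_eq del: mult_pCons_left)
    have lin: "poly_eval [:-r, 1:] a = a - scaleC r 1"
      by (simp add: scaleC_one scaleC_minus_left)
    have "corner_invertible e (poly_eval h a) \<longleftrightarrow>
          corner_invertible e (a - scaleC r 1) \<and> corner_invertible e (poly_eval k a)"
      unfolding hk poly_eval_mult lin
      by (rule corner_invertible_mult_iff[OF ee commute_minus_scaleC_one[OF ae] poly_eval_commute[OF ae]])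
         (rule poly_eval_commute[OF commute_minus_scaleC_one[OF refl, symmetric], symmetric])
    also have "\<dots> \<longleftrightarrow> corner_invertible e (a - scaleC r 1) \<and>
                       (\<forall>l. poly k l = 0 \<longrightarrow> corner_invertible e (a - scaleC l 1))"
      using less.hyps[OF \<open>degree k < degree h\<close> \<open>k \<noteq> 0\<close>] by simp
    also have "\<dots> \<longleftrightarrow> (\<forall>l. poly h l = 0 \<longrightarrow> corner_invertible e (a - scaleC l 1))"
      unfolding hk by auto
    finally show ?thesis .
  qed
qed

lemma corner_spectrum_poly_eval:
  fixes a e :: "'a::complex_banach_algebra_1"
  assumes "e * e = e" and "a * e = e * a" and "degree h \<noteq> 0"
  shows "corner_spectrum e (poly_eval h a) = poly h ` corner_spectrum e a"
proof -
  have "\<mu> \<in> corner_spectrum e (poly_eval h a) \<longleftrightarrow> (\<exists>l\<in>corner_spectrum e a. poly h l = \<mu>)" for \<mu>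
  proof -
    have "h - [:\<mu>:] \<noteq> 0"
      using assms(3) by (metis degree_pCons_0 eq_iff_diff_eq_0)
    moreover have "poly_eval h a - scaleC \<mu> 1 = poly_eval (h - [:\<mu>:]) a"
      by (simp add: poly_eval_diff)
    ultimately show ?thesis
      unfolding corner_spectrum_def using corner_invertible_poly_eval_iff[OF assms(1,2)] by auto
  qed
  then show ?thesis by (auto simp: image_iff)
qed

lemma image_Un_image_eq_singleton_iff:
  "f ` S \<union> g ` T = {c} \<longleftrightarrow> (\<forall>s\<in>S. f s = c) \<and> (\<forall>t\<in>T. g t = c) \<and> S \<union> T \<noteq> {}"
  by auto

lemma power_eq_power_iff_power_eq_1:
  fixes t :: "'a::idom"
  assumes "t \<noteq> 0" and "n = k + d \<or> k = n + d"
  shows "t ^ n = t ^ k \<longleftrightarrow> t ^ d = 1"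
  using assms by (auto simp: power_add)

context
  fixes a x :: "'a::complex_banach_algebra_1"
  assumes inner_inverse: "x * a * x = x" and commute: "x * a = a * x"
begin

lemma idempotent_mult_inner_inverse: "(a * x) * (a * x) = a * x"
  by (metis inner_inverse mult.assoc)

lemma commute_mult_inner_inverse: "a * (a * x) = (a * x) * a"
  by (metis commute mult.assoc)

lemma spectrum_poly_eval_peirce:
  assumes "degree f \<noteq> 0" and "degree g \<noteq> 0"
  shows "spectrum (poly_eval f a * (1 - a * x) + poly_eval g a * (a * x)) =
         poly f ` corner_spectrum (1 - a * x) a \<union> poly g ` corner_spectrum (a * x) a"
proof -
  have "(1 - a * x) * (1 - a * x) = 1 - a * x" and "a * (1 - a * x) = (1 - a * x) * a"
    using idempotent_mult_inner_inverse commute_mult_inner_inverse by (simp_all add: algebra_simps)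
  then show ?thesis
    using spectrum_peirce_sum[OF idempotent_mult_inner_inverse]
      poly_eval_commute[OF commute_mult_inner_inverse]
      corner_spectrum_poly_eval[OF idempotent_mult_inner_inverse _ assms(2)]
      corner_spectrum_poly_eval[of "1 - a * x" a f] assms(1) commute_mult_inner_inverse
    by simp
qed

lemma zero_notin_corner_spectrum: "0 \<notin> corner_spectrum (a * x) a"
proof -
  have "x * (a * x) = (a * x) * x"
    by (metis commute mult.assoc)
  then have "(a * (a * x) + (1 - a * x)) * (x * (a * x) + (1 - a * x)) = a * x * (a * x) + (1 - a * x)"
    and "(x * (a * x) + (1 - a * x)) * (a * (a * x) + (1 - a * x)) = x * a * (a * x) + (1 - a * x)"
    using corner_mult[OF idempotent_mult_inner_inverse] commute_mult_inner_inverse by blast+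
  then show ?thesis
    unfolding corner_spectrum_def corner_invertible_def invertible_elem_def
    using idempotent_mult_inner_inverse commute by auto
qed

lemma spectrum_power_diff:
  assumes "n > 0" and "k \<noteq> n"
  shows "spectrum (a ^ n - a ^ Suc k * x) =
         (\<lambda>l. l ^ n) ` corner_spectrum (1 - a * x) a \<union> (\<lambda>l. l ^ n - l ^ k) ` corner_spectrum (a * x) a"
proof -
  have "a ^ n - a ^ Suc k * x = a ^ n * (1 - a * x) + (a ^ n - a ^ k) * (a * x)"
    by (simp add: algebra_simps power_Suc2 del: power_Suc)
  also have "\<dots> = poly_eval (monom 1 n) a * (1 - a * x) + poly_eval (monom 1 n - monom 1 k) a * (a * x)"
    by (simp add: poly_eval_diff poly_eval_monom_one)
  moreover have "degree (monom 1 n - monom 1 k :: complex poly) \<noteq> 0"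
  proof -
    have "coeff (monom 1 n - monom 1 k :: complex poly) (max n k) \<noteq> 0"
      using assms(2) by (simp add: max_def)
    then have "max n k \<le> degree (monom 1 n - monom 1 k :: complex poly)"
      by (rule le_degree)
    then show ?thesis
      using assms(1) by simp
  qed
  ultimately show ?thesis
    using spectrum_poly_eval_peirce[of "monom 1 n" "monom 1 n - monom 1 k"] assms(1)
    by (simp add: degree_monom_eq poly_monom)
qed

lemma qnil_power_diff_iff:
  assumes "n > 0" and "k \<noteq> n"
  shows "a ^ n - a ^ Suc k * x \<in> qnil \<longleftrightarrow>
         corner_spectrum (1 - a * x) a \<subseteq> {0} \<and>
         (\<forall>t\<in>corner_spectrum (a * x) a. t ^ n = t ^ k) \<and>
         corner_spectrum (1 - a * x) a \<union> corner_spectrum (a * x) a \<noteq> {}"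
  unfolding qnil_def mem_Collect_eq spectrum_power_diff[OF assms] image_Un_image_eq_singleton_iff
  using assms(1) by auto

lemma qnil_power_diff_iff_gap:
  assumes "n > 0" and "d > 0" and "n = k + d \<or> k = n + d"
  shows "a ^ n - a ^ Suc k * x \<in> qnil \<longleftrightarrow> a ^ d - a * x \<in> qnil"
proof -
  have "k \<noteq> n"
    using assms(2,3) by auto
  have "t ^ n = t ^ k \<longleftrightarrow> t ^ d = t ^ 0" if "t \<in> corner_spectrum (a * x) a" for t
  proof -
    have "t \<noteq> 0"
      using zero_notin_corner_spectrum that by blast
    then show ?thesis
      using power_eq_power_iff_power_eq_1[OF _ assms(3)] by simp
  qed
  then show ?thesis
    using qnil_power_diff_iff[OF assms(1) \<open>k \<noteq> n\<close>] qnil_power_diff_iff[OF assms(2), of 0] assms(2)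
    by auto
qed

lemma ex_qnil_hirano_iff:
  "(\<exists>n>0. a - a ^ (n + 2) * x \<in> qnil) \<longleftrightarrow> (\<exists>n>0. a ^ n - a * x \<in> qnil)"
proof -
  have "a - a ^ (n + 2) * x \<in> qnil \<longleftrightarrow> a ^ n - a * x \<in> qnil" if "n > 0" for n
    using qnil_power_diff_iff_gap[of 1 n "n + 1"] that by simp
  then show ?thesis
    by blast
qed

lemma ex_qnil_power_diff_iff:
  "(\<exists>m>0. \<exists>n>0. int m - int n \<noteq> 1 \<and> a ^ n - a ^ m * x \<in> qnil) \<longleftrightarrow>
   (\<exists>n>0. a ^ n - a * x \<in> qnil)"
proof
  assume "\<exists>m>0. \<exists>n>0. int m - int n \<noteq> 1 \<and> a ^ n - a ^ m * x \<in> qnil"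
  then obtain m n where "m > 0" and "n > 0" and "int m - int n \<noteq> 1"
    and qnil: "a ^ n - a ^ m * x \<in> qnil"
    by blast
  then obtain k where m: "m = Suc k"
    using gr0_implies_Suc by blast
  then have "k \<noteq> n"
    using \<open>int m - int n \<noteq> 1\<close> by simp
  obtain d where "d > 0" and "n = k + d \<or> k = n + d"
  proof (cases "k < n")
    case True
    then show ?thesis
      using that[of "n - k"] by simp
  next
    case False
    then show ?thesis
      using that[of "k - n"] \<open>k \<noteq> n\<close> by simp
  qed
  then show "\<exists>n>0. a ^ n - a * x \<in> qnil"
    using qnil_power_diff_iff_gap[OF \<open>n > 0\<close>] qnil m by blast
next
  assume "\<exists>n>0. a ^ n - a * x \<in> qnil"
  then show "\<exists>m>0. \<exists>n>0. int m - int n \<noteq> 1 \<and> a ^ n - a ^ m * x \<in> qnil"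
    by (intro exI[of _ 1]) auto
qed

end

theorem theorem2p4:
  fixes a x :: "'a::complex_banach_algebra_1"
  shows "(gpi_hirano_inverse a x
          \<longleftrightarrow> (x * a * x = x \<and> x * a = a * x \<and> (\<exists>n>0. a ^ n - a * x \<in> qnil)))
       \<and> ((x * a * x = x \<and> x * a = a * x \<and> (\<exists>n>0. a ^ n - a * x \<in> qnil))
          \<longleftrightarrow> (x * a * x = x \<and> x * a = a * x \<and>
               (\<exists>m>0. \<exists>n>0. int m - int n \<noteq> 1 \<and> a ^ n - a ^ m * x \<in> qnil)))"
proof -
  have hirano: "gpi_hirano_inverse a x \<longleftrightarrow>
                x * a * x = x \<and> x * a = a * x \<and> (\<exists>n>0. a - a ^ (n + 2) * x \<in> qnil)"
    unfolding gpi_hirano_inverse_def by auto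
  show ?thesis
  proof (cases "x * a * x = x \<and> x * a = a * x")
    case True
    then have inner: "x * a * x = x" and comm: "x * a = a * x"
      by auto
    show ?thesis
      unfolding hirano ex_qnil_hirano_iff[OF inner comm] ex_qnil_power_diff_iff[OF inner comm]
      by simp
  next
    case False
    then show ?thesis
      unfolding hirano by blast
  qed
qed

end
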